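(* Let $G=(V,E)$ be an undirected graph without self-loops, let $u\ne v$ be vertices with $u$ dominating $v$, and let $\vec z=(z_1,\dots,z_N)$ be a list of all vertices of $V$ in which $v$ occurs before $u$. Let $O_{\mathrm{lex}}(\vec a,\vec b)$ be the constraint $\sum_{i=1}^N 2^{N-i}(b_i-a_i)\ge0$, let $\omega$ swap $u$ and $v$, and let $C$ be $u+\bar v\ge1$. Then for every set $\mathcal D$ of PB constraints and every $k\in\mathbb Z\cup\{\infty\}$: $$F_G\cup\mathcal D\cup\{f\le k-1\}\cup\{\neg C\}\vdash F_G|_\omega\cup O_{\mathrm{lex}}(\vec z|_\omega,\vec z)\cup\{f|_\omega\le f\},$$ $$F_G\cup\mathcal D\cup\{f\le k-1\}\cup\{\neg C\}\cup O_{\mathrm{lex}}(\vec z,\vec z|_\omega)\vdash 0\ge1,$$ i.e. the dominance-based strengthening conditions hold for deriving $u+\bar v\ge1$ with witness $\omega$ from any configuration with core set $F_G$, derived set $\mathcal D$, preorder $(O_{\mathrm{lex}},\vec z)$ and bound $k$.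
   Context: Each vertex $w\in V$ is identified with a Boolean variable. $F_G$ is the PB formula consisting of $\bar a+\bar b\ge1$ for all distinct non-adjacent $a,b\in V$; the objective is $f=\sum_{w\in V}\bar w$. $N(w)=\{w':(w,w')\in E\}$; for distinct $a,b$, $a$ dominates $b$ if $N(a)\setminus\{b\}\supseteq N(b)\setminus\{a\}$. A literal is a variable or its negation $\bar x=1-x$; a PB constraint is $\sum_i a_i\ell_i\ge A$ with negation $\sum_i-a_i\ell_i\ge -A+1$. For a substitution $\omega$, $C|_\omega$ replaces each literal by its image, and $G|_\omega$, $f|_\omega$ likewise. $O(\vec z|_\alpha,\vec z|_\beta)$ is $O(\vec a,\vec b)$ with $a_i$ replaced by $\alpha(z_i)$ and $b_i$ by $\beta(z_i)$ (by $z_i$ itself when no substitution is indicated). $\vdash$ denotes cutting planes derivability (axioms, literal axioms $\ell\ge0$, positive integer linear combinations, division with rounding up), extended so that $H\vdash D$ whenever $0\ge1$ is derivable from $H\cup\{\neg D\}$. $f\le\infty-1$ is the trivially true constraint. *)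

theory Defs
  imports Main "HOL-Library.Multiset"
begin

datatype 'v lit = Pos 'v | Neg 'v

fun lit_neg :: "'v lit \<Rightarrow> 'v lit" where
  "lit_neg (Pos x) = Neg x"
| "lit_neg (Neg x) = Pos x"

text \<open>A PB constraint \<open>\<Sum>i a_i l_i \<ge> A\<close>: a finite multiset of (coefficient, literal)
  terms together with the degree \<open>A\<close>.\<close>
type_synonym 'v pbc = "(int \<times> 'v lit) multiset \<times> int"

definition pbc_neg :: "'v pbc \<Rightarrow> 'v pbc" where
  "pbc_neg C = (image_mset (\<lambda>(a, l). (- a, l)) (fst C), - snd C + 1)"

fun lit_subst :: "('v \<Rightarrow> 'v lit) \<Rightarrow> 'v lit \<Rightarrow> 'v lit" where
  "lit_subst \<omega> (Pos x) = \<omega> x"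
| "lit_subst \<omega> (Neg x) = lit_neg (\<omega> x)"

definition terms_subst :: "('v \<Rightarrow> 'v lit) \<Rightarrow> (int \<times> 'v lit) multiset \<Rightarrow> (int \<times> 'v lit) multiset" where
  "terms_subst \<omega> T = image_mset (\<lambda>(a, l). (a, lit_subst \<omega> l)) T"

definition pbc_subst :: "('v \<Rightarrow> 'v lit) \<Rightarrow> 'v pbc \<Rightarrow> 'v pbc" where
  "pbc_subst \<omega> C = (terms_subst \<omega> (fst C), snd C)"

definition terms_neg :: "(int \<times> 'v lit) multiset \<Rightarrow> (int \<times> 'v lit) multiset" where
  "terms_neg T = image_mset (\<lambda>(a, l). (- a, l)) T"

text \<open>Canonical (normalised) form of a constraint: writing \<open>x\<bar> = 1 - x\<close>, the constraint
  \<open>\<Sum> a_i l_i \<ge> A\<close> is the linear inequality \<open>\<Sum>x c(x) x \<ge> d\<close>.  Cutting-planes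
  reasoning is carried out on these canonical forms (so that e.g. \<open>x + x\<bar>\<close> simplifies to 1).\<close>

fun term_coef :: "'v \<Rightarrow> int \<times> 'v lit \<Rightarrow> int" where
  "term_coef x (a, Pos y) = (if y = x then a else 0)"
| "term_coef x (a, Neg y) = (if y = x then - a else 0)"

fun term_const :: "int \<times> 'v lit \<Rightarrow> int" where
  "term_const (a, Pos y) = 0"
| "term_const (a, Neg y) = a"

definition canon :: "'v pbc \<Rightarrow> ('v \<Rightarrow> int) \<times> int" where
  "canon C = ((\<lambda>x. sum_mset (image_mset (term_coef x) (fst C))),
              snd C - sum_mset (image_mset term_const (fst C)))"

definition cdiv :: "int \<Rightarrow> int \<Rightarrow> int" where
  "cdiv a m = - ((- a) div m)"

text \<open>Division with rounding up, performed on the normalised literal form: a variable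
  with negative coefficient \<open>c\<close> is read as literal \<open>x\<bar>\<close> with coefficient \<open>-c\<close>.\<close>
definition cp_divide :: "('v \<Rightarrow> int) \<times> int \<Rightarrow> int \<Rightarrow> ('v \<Rightarrow> int) \<times> int" where
  "cp_divide D m =
     (let c = fst D; d = snd D; NV = {x. c x < 0} in
       ((\<lambda>x. sgn (c x) * cdiv \<bar>c x\<bar> m),
        cdiv (d + (\<Sum>x\<in>NV. - c x)) m - (\<Sum>x\<in>NV. cdiv (- c x) m)))"

inductive cp_deriv :: "'v pbc set \<Rightarrow> ('v \<Rightarrow> int) \<times> int \<Rightarrow> bool" for H where
  axiom: "C \<in> H \<Longrightarrow> cp_deriv H (canon C)"
| lit_pos: "cp_deriv H (canon ({#(1, Pos x)#}, 0))"
| lit_neg: "cp_deriv H (canon ({#(1, Neg x)#}, 0))"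
| add: "cp_deriv H (c1, d1) \<Longrightarrow> cp_deriv H (c2, d2) \<Longrightarrow> cp_deriv H ((\<lambda>x. c1 x + c2 x), d1 + d2)"
| mult: "cp_deriv H (c, d) \<Longrightarrow> (m::int) > 0 \<Longrightarrow> cp_deriv H ((\<lambda>x. m * c x), m * d)"
| divide: "cp_deriv H D \<Longrightarrow> (m::int) > 0 \<Longrightarrow> cp_deriv H (cp_divide D m)"

definition contradiction :: "'v pbc" where
  "contradiction = ({#}, 1)"

definition implies :: "'v pbc set \<Rightarrow> 'v pbc \<Rightarrow> bool" where
  "implies H D \<longleftrightarrow> cp_deriv H (canon D) \<or> cp_deriv (insert (pbc_neg D) H) (canon contradiction)"

definition implies_set :: "'v pbc set \<Rightarrow> 'v pbc set \<Rightarrow> bool" where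
  "implies_set H S \<longleftrightarrow> (\<forall>D\<in>S. implies H D)"

definition FG :: "'v set \<Rightarrow> ('v \<times> 'v) set \<Rightarrow> 'v pbc set" where
  "FG V E = {({#(1, Neg a), (1, Neg b)#}, 1) | a b. a \<in> V \<and> b \<in> V \<and> a \<noteq> b \<and> (a, b) \<notin> E}"

definition obj :: "'v set \<Rightarrow> (int \<times> 'v lit) multiset" where
  "obj V = image_mset (\<lambda>w. (1, Neg w)) (mset_set V)"

datatype ext_int = Fin int | PInf

text \<open>The constraint \<open>f \<le> k - 1\<close>, i.e. \<open>\<Sum> -w\<bar> \<ge> 1 - k\<close>; for \<open>k = \<infinity>\<close> the trivially
  true constraint \<open>0 \<ge> 0\<close>.\<close>
fun obj_bound :: "'v set \<Rightarrow> ext_int \<Rightarrow> 'v pbc" where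
  "obj_bound V (Fin k) = (terms_neg (obj V), 1 - k)"
| "obj_bound V PInf = ({#}, 0)"

text \<open>\<open>f|\<omega> \<le> f\<close>, i.e. \<open>f - f|\<omega> \<ge> 0\<close>.\<close>
definition obj_improve :: "('v \<Rightarrow> 'v lit) \<Rightarrow> 'v set \<Rightarrow> 'v pbc" where
  "obj_improve \<omega> V = (obj V + terms_neg (terms_subst \<omega> (obj V)), 0)"

text \<open>\<open>O_lex(z|\<alpha>, z|\<beta>)\<close> = \<open>\<Sum>i=1..N 2^(N-i) (\<beta>(z_i) - \<alpha>(z_i)) \<ge> 0\<close>
  (list index \<open>j = i - 1\<close>); the identity substitution is \<open>Pos\<close>.\<close>
definition olex :: "'v list \<Rightarrow> ('v \<Rightarrow> 'v lit) \<Rightarrow> ('v \<Rightarrow> 'v lit) \<Rightarrow> 'v pbc" where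
  "olex zs \<alpha> \<beta> =
     (mset (map (\<lambda>j. ((2::int) ^ (length zs - Suc j), \<beta> (zs ! j))) [0..<length zs])
      + mset (map (\<lambda>j. (- ((2::int) ^ (length zs - Suc j)), \<alpha> (zs ! j))) [0..<length zs]),
      0)"

definition swap :: "'v \<Rightarrow> 'v \<Rightarrow> 'v \<Rightarrow> 'v lit" where
  "swap u v = (\<lambda>x. if x = u then Pos v else if x = v then Pos u else Pos x)"

definition nbhd :: "('v \<times> 'v) set \<Rightarrow> 'v \<Rightarrow> 'v set" where
  "nbhd E w = {w'. (w, w') \<in> E}"

definition dominates :: "('v \<times> 'v) set \<Rightarrow> 'v \<Rightarrow> 'v \<Rightarrow> bool" where
  "dominates E a b \<longleftrightarrow> a \<noteq> b \<and> nbhd E b - {a} \<subseteq> nbhd E a - {b}"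

end

theory Submission
  imports Defs "HOL-Combinatorics.Transposition"
begin

text \<open>In canonical form \<open>\<not>C\<close> reads \<open>v - u \<ge> 1\<close>, and it alone yields everything required.
  A clause \<open>a\<bar> + b\<bar> \<ge> 1\<close> of \<open>F_G\<close> is mapped by \<open>\<omega>\<close> either to a clause of \<open>F_G\<close> again or,
  because \<open>u\<close> dominates \<open>v\<close>, to a clause containing \<open>u\<bar>\<close>, which follows from \<open>\<not>C\<close>.
  Since \<open>\<omega>\<close> only exchanges the coefficients of \<open>u\<close> and \<open>v\<close>, \<open>O_lex(z|\<omega>, z)\<close> is
  \<open>c (v - u) \<ge> 0\<close> and \<open>O_lex(z, z|\<omega>)\<close> is \<open>c (u - v) \<ge> 0\<close>, where \<open>c > 0\<close> is the
  difference of the weights of \<open>v\<close> and \<open>u\<close> (\<open>v\<close> comes first): the former is a weakening of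
  \<open>c \<cdot> \<not>C\<close>, the latter added to \<open>c \<cdot> \<not>C\<close> gives \<open>0 \<ge> c\<close>.  Finally \<open>f|\<omega> = f\<close> as \<open>\<omega>\<close>
  permutes \<open>V\<close>.\<close>

lemma swap_eq_transpose: "swap u v = (\<lambda>x. Pos (transpose u v x))"
  by (simp add: swap_def transpose_def fun_eq_iff)

lemma cp_deriv_addI:
  assumes "cp_deriv H (c1, d1)" and "cp_deriv H (c2, d2)"
    and "\<And>x. c x = c1 x + c2 x" and "d = d1 + d2"
  shows "cp_deriv H (c, d)"
  using cp_deriv.add[OF assms(1,2)] assms(3,4) by (metis ext)

lemma cp_deriv_multI:
  assumes "cp_deriv H (c1, d1)" and "m > 0" and "\<And>x. c x = m * c1 x" and "d = m * d1"
  shows "cp_deriv H (c, d)"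
  using cp_deriv.mult[OF assms(1,2)] assms(3,4) by (metis ext)

lemma cp_deriv_pos_lit: "cp_deriv H (\<lambda>y. if y = x then 1 else 0, 0)"
  using cp_deriv.lit_pos[of H x] by (simp add: canon_def eq_commute)

lemma cp_deriv_neg_lit: "cp_deriv H (\<lambda>y. if y = x then -1 else 0, -1)"
  using cp_deriv.lit_neg[of H x] by (simp add: canon_def eq_commute)

lemma cp_deriv_zero_ge_minus_one: "cp_deriv H (\<lambda>_. 0, -1)"
  by (rule cp_deriv_addI[OF cp_deriv_pos_lit cp_deriv_neg_lit]) auto

lemma cp_deriv_trivial: "cp_deriv H (\<lambda>_. 0, 0)"
  using cp_deriv.divide[OF cp_deriv_zero_ge_minus_one, of 2]
  by (simp add: cp_divide_def cdiv_def)

lemma cp_deriv_weaken: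
  assumes "cp_deriv H (c, d)" and "d' \<le> d"
  shows "cp_deriv H (c, d')"
proof (cases "d' = d")
  case False
  have "cp_deriv H (\<lambda>_. 0, d' - d)"
    by (rule cp_deriv_multI[OF cp_deriv_zero_ge_minus_one, of "d - d'"]) (use assms False in auto)
  then show ?thesis
    by (rule cp_deriv_addI[OF assms(1)]) auto
qed (use assms in simp)

lemma canon_cancel: "canon (T + terms_neg T, 0) = (\<lambda>_. 0, 0)"
proof -
  have neg_term: "term_coef x (- a, l) = - term_coef x (a, l)" "term_const (- a, l) = - term_const (a, l)"
    for x a and l :: "'v lit"
    by (cases l; simp)+
  have "sum_mset (image_mset (term_coef x) (terms_neg T)) = - sum_mset (image_mset (term_coef x) T)"
    and "sum_mset (image_mset term_const (terms_neg T)) = - sum_mset (image_mset term_const T)" for x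
    by (induction T) (auto simp: terms_neg_def neg_term)
  then show ?thesis
    by (simp add: canon_def)
qed

definition lex_weight :: "'v list \<Rightarrow> 'v \<Rightarrow> int" where
  "lex_weight zs x = (\<Sum>j<length zs. if zs ! j = x then 2 ^ (length zs - Suc j) else 0)"

lemma lex_weight_nth:
  assumes "distinct zs" and "i < length zs"
  shows "lex_weight zs (zs ! i) = 2 ^ (length zs - Suc i)"
proof -
  have "lex_weight zs (zs ! i) = (\<Sum>j<length zs. if j = i then 2 ^ (length zs - Suc j) else 0)"
    unfolding lex_weight_def using assms by (intro sum.cong) (auto simp: nth_eq_iff_index_eq)
  then show ?thesis using assms by simp
qed

lemma lex_weight_less:
  assumes "distinct zs" and "i < j" and "j < length zs"
  shows "lex_weight zs (zs ! j) < lex_weight zs (zs ! i)"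
  using assms by (simp add: lex_weight_nth power_strict_increasing)

lemma canon_olex:
  assumes "bij \<sigma>" and "bij \<tau>"
  shows "canon (olex zs (\<lambda>y. Pos (\<sigma> y)) (\<lambda>y. Pos (\<tau> y)))
           = (\<lambda>x. lex_weight zs (inv \<tau> x) - lex_weight zs (inv \<sigma> x), 0)"
proof -
  have preimage: "(\<rho> y = x) = (y = inv \<rho> x)" if "bij \<rho>" for \<rho> and x y :: 'a
    using that by (auto simp: bij_inv_eq_iff)
  have neg_if: "(if P then - a else 0) = - (if P then a else (0::int))" for P a
    by simp
  show ?thesis
    unfolding canon_def olex_def lex_weight_def
    apply (simp only: fst_conv snd_conv image_mset_union sum_mset.union mset_map[symmetric]
        sum_mset_sum_list map_map o_def)
    apply (simp add: sum_list_addf preimage[OF assms(1)] preimage[OF assms(2)] atLeast0LessThan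
        neg_if sum_negf flip: sum_set_upt_conv_sum_list_nat)
    done
qed

lemma canon_olex_swap_Pos:
  "canon (olex zs (swap u v) Pos)
     = (\<lambda>x. (lex_weight zs v - lex_weight zs u) * ((if x = v then 1 else 0) - (if x = u then 1 else 0)), 0)"
  using canon_olex[of "transpose u v" id zs]
  by (cases "u = v") (auto simp: swap_eq_transpose fun_eq_iff transpose_def)

lemma canon_olex_Pos_swap:
  "canon (olex zs Pos (swap u v))
     = (\<lambda>x. (lex_weight zs v - lex_weight zs u) * ((if x = u then 1 else 0) - (if x = v then 1 else 0)), 0)"
  using canon_olex[of id "transpose u v" zs]
  by (cases "u = v") (auto simp: swap_eq_transpose fun_eq_iff transpose_def)

lemma terms_subst_swap_obj:
  assumes "u \<in> V" and "v \<in> V"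
  shows "terms_subst (swap u v) (obj V) = obj V"
proof -
  have "image_mset (transpose u v) (mset_set V) = mset_set V"
    using image_mset_mset_set[OF inj_on_transpose, of u v V] assms by simp
  moreover have "terms_subst (swap u v) (obj V)
      = image_mset (\<lambda>w. (1, Neg w)) (image_mset (transpose u v) (mset_set V))"
    by (simp add: terms_subst_def obj_def swap_eq_transpose multiset.map_comp o_def)
  ultimately show ?thesis
    by (simp add: obj_def)
qed

lemma implies_obj_improve_swap:
  assumes "u \<in> V" and "v \<in> V"
  shows "implies H (obj_improve (swap u v) V)"
  unfolding implies_def obj_improve_def terms_subst_swap_obj[OF assms] canon_cancel
  using cp_deriv_trivial by blast

lemma dominates_transpose_edge:
  assumes "sym E" and "dominates E u v" and "a \<noteq> b" and "(a, b) \<notin> E"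
    and "(transpose u v a, transpose u v b) \<in> E"
  shows "transpose u v a = u \<or> transpose u v b = u"
proof (rule ccontr)
  assume not_u: "\<not> ?thesis"
  have "u \<noteq> v" and to_u: "\<And>w. (v, w) \<in> E \<Longrightarrow> w \<noteq> u \<Longrightarrow> (u, w) \<in> E"
    using assms(2) unfolding dominates_def nbhd_def by auto
  with not_u have "a \<noteq> v" and "b \<noteq> v"
    by auto
  consider "a = u" | "b = u" | "a \<noteq> u" "b \<noteq> u"
    by blast
  then show False
  proof cases
    case 1
    with assms(3,5) \<open>b \<noteq> v\<close> have "(v, b) \<in> E" and "b \<noteq> u"
      by auto
    with to_u assms(4) 1 show False
      by blast
  next
    case 2
    with assms(3,5) \<open>a \<noteq> v\<close> have "(v, a) \<in> E" and "a \<noteq> u"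
      using assms(1) by (auto dest: symD)
    with to_u assms(1,4) 2 show False
      by (blast dest: symD)
  next
    case 3
    with assms(4,5) \<open>a \<noteq> v\<close> \<open>b \<noteq> v\<close> show False
      by simp
  qed
qed

lemma pbc_subst_swap_FG:
  assumes "sym E" and "dominates E u v" and "u \<in> V" and "v \<in> V" and "C \<in> FG V E"
  shows "pbc_subst (swap u v) C \<in> FG V E
         \<or> (\<exists>w. pbc_subst (swap u v) C = ({#(1, Neg u), (1, Neg w)#}, 1))"
proof -
  obtain a b where ab: "a \<in> V" "b \<in> V" "a \<noteq> b" "(a, b) \<notin> E"
    and C: "C = ({#(1, Neg a), (1, Neg b)#}, 1)"
    using assms(5) by (auto simp: FG_def)
  have subst: "pbc_subst (swap u v) C
      = ({#(1, Neg (transpose u v a)), (1, Neg (transpose u v b))#}, 1)"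
    by (simp add: C pbc_subst_def terms_subst_def swap_eq_transpose)
  show ?thesis
  proof (cases "(transpose u v a, transpose u v b) \<in> E")
    case True
    then have "transpose u v a = u \<or> transpose u v b = u"
      by (rule dominates_transpose_edge[OF assms(1,2) ab(3,4)])
    then show ?thesis
      unfolding subst by (auto simp: add_mset_commute)
  next
    case False
    moreover have "transpose u v a \<in> V" and "transpose u v b \<in> V"
      using ab assms(3,4) by (auto simp: transpose_def)
    moreover have "transpose u v a \<noteq> transpose u v b"
      using ab(3) transpose_eq_imp_eq by metis
    ultimately show ?thesis
      unfolding subst FG_def by blast
  qed
qed

context
  fixes H :: "'v pbc set" and u v :: 'v
  assumes neg_C_mem: "pbc_neg ({#(1, Pos u), (1, Neg v)#}, 1) \<in> H"
begin

lemma cp_deriv_neg_C: "cp_deriv H (\<lambda>y. (if y = v then 1 else 0) - (if y = u then 1 else 0), 1)"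
proof -
  have "canon (pbc_neg ({#(1, Pos u), (1, Neg v)#}, 1))
      = (\<lambda>y. (if y = v then 1 else 0) - (if y = u then 1 else 0), 1)"
    by (auto simp: canon_def pbc_neg_def fun_eq_iff)
  with cp_deriv.axiom[OF neg_C_mem] show ?thesis
    by simp
qed

lemma cp_deriv_not_u: "cp_deriv H (\<lambda>y. if y = u then -1 else 0, 0)"
  by (rule cp_deriv_addI[OF cp_deriv_neg_C cp_deriv_neg_lit[of H v]]) auto

lemma implies_clause_not_u: "implies H ({#(1, Neg u), (1, Neg w)#}, 1)"
proof -
  have "cp_deriv H (\<lambda>y. (if y = u then -1 else 0) + (if y = w then -1 else 0), -1)"
    by (rule cp_deriv_addI[OF cp_deriv_not_u cp_deriv_neg_lit[of H w]]) auto
  then show ?thesis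
    unfolding implies_def by (simp add: canon_def eq_commute)
qed

lemma implies_swapped_FG:
  assumes "sym E" and "dominates E u v" and "u \<in> V" and "v \<in> V" and "FG V E \<subseteq> H"
  shows "implies_set H (pbc_subst (swap u v) ` FG V E)"
  unfolding implies_set_def
proof
  fix D
  assume "D \<in> pbc_subst (swap u v) ` FG V E"
  then have "D \<in> H \<or> (\<exists>w. D = ({#(1, Neg u), (1, Neg w)#}, 1))"
    using pbc_subst_swap_FG[OF assms(1-4)] assms(5) by blast
  then show "implies H D"
    unfolding implies_def using cp_deriv.axiom implies_clause_not_u[unfolded implies_def] by blast
qed

lemma implies_olex_swap_Pos:
  assumes "lex_weight zs u < lex_weight zs v"
  shows "implies H (olex zs (swap u v) Pos)"
proof -
  define c where "c = lex_weight zs v - lex_weight zs u"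
  have "c > 0"
    using assms by (simp add: c_def)
  then have "cp_deriv H (\<lambda>x. c * ((if x = v then 1 else 0) - (if x = u then 1 else 0)), c)"
    by (rule cp_deriv_multI[OF cp_deriv_neg_C]) auto
  then have "cp_deriv H (\<lambda>x. c * ((if x = v then 1 else 0) - (if x = u then 1 else 0)), 0)"
    by (rule cp_deriv_weaken) (use \<open>c > 0\<close> in simp)
  then show ?thesis
    unfolding implies_def canon_olex_swap_Pos c_def by blast
qed

lemma implies_contradiction_olex_Pos_swap:
  assumes "lex_weight zs u < lex_weight zs v" and "olex zs Pos (swap u v) \<in> H"
  shows "implies H contradiction"
proof -
  define c where "c = lex_weight zs v - lex_weight zs u"
  have "c > 0"
    using assms by (simp add: c_def)
  have "cp_deriv H (\<lambda>x. c * ((if x = u then 1 else 0) - (if x = v then 1 else 0)), 0)"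
    using cp_deriv.axiom[OF assms(2)] by (simp add: canon_olex_Pos_swap c_def)
  moreover have "cp_deriv H (\<lambda>x. c * ((if x = v then 1 else 0) - (if x = u then 1 else 0)), c)"
    by (rule cp_deriv_multI[OF cp_deriv_neg_C \<open>c > 0\<close>]) auto
  ultimately have "cp_deriv H (\<lambda>_. 0, c)"
    by (rule cp_deriv_addI) (auto simp: algebra_simps)
  then have "cp_deriv H (\<lambda>_. 0, 1)"
    by (rule cp_deriv_weaken) (use \<open>c > 0\<close> in simp)
  then show ?thesis
    unfolding implies_def by (simp add: canon_def contradiction_def)
qed

end

theorem mainTheorem13:
  fixes V :: "'v set" and E :: "('v \<times> 'v) set" and u v :: 'v and zs :: "'v list"
    and \<D> :: "'v pbc set" and k :: ext_int
  assumes "finite V" and "E \<subseteq> V \<times> V" and "sym E" and "\<forall>x. (x, x) \<notin> E"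
    and "u \<in> V" and "v \<in> V" and "u \<noteq> v" and "dominates E u v"
    and "distinct zs" and "set zs = V"
    and "\<exists>i j. i < j \<and> j < length zs \<and> zs ! i = v \<and> zs ! j = u"
  shows "implies_set (FG V E \<union> \<D> \<union> {obj_bound V k} \<union> {pbc_neg ({#(1, Pos u), (1, Neg v)#}, 1)})
           (pbc_subst (swap u v) ` FG V E \<union> {olex zs (swap u v) Pos} \<union> {obj_improve (swap u v) V})
       \<and> implies (FG V E \<union> \<D> \<union> {obj_bound V k} \<union> {pbc_neg ({#(1, Pos u), (1, Neg v)#}, 1)}
                   \<union> {olex zs Pos (swap u v)})
           contradiction"
proof -
  let ?H = "FG V E \<union> \<D> \<union> {obj_bound V k} \<union> {pbc_neg ({#(1, Pos u), (1, Neg v)#}, 1)}"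
  let ?H' = "?H \<union> {olex zs Pos (swap u v)}"
  have lex: "lex_weight zs u < lex_weight zs v"
    using assms(11) lex_weight_less[OF assms(9)] by blast
  have "implies_set ?H (pbc_subst (swap u v) ` FG V E)"
    by (rule implies_swapped_FG) (use assms(3,5,6,8) in auto)
  moreover have "implies ?H (olex zs (swap u v) Pos)"
    by (rule implies_olex_swap_Pos[OF _ lex]) simp
  moreover have "implies ?H (obj_improve (swap u v) V)"
    by (rule implies_obj_improve_swap[OF assms(5,6)])
  moreover have "implies ?H' contradiction"
    by (rule implies_contradiction_olex_Pos_swap[OF _ lex]) simp_all
  ultimately show ?thesis
    unfolding implies_set_def by blast
qed

end
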